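(* Let $G=\{\cdot\mid *\}$, $H=\{\cdot\mid 1\}$, and $\mathcal{U}=\mathcal{D}(G,H)$. Then $G\not\equiv_\mathcal{U}0$.
   Context: Games are finite partizan games; $*=\{0\mid0\}$, $1=\{0\mid\cdot\}$; $\{\cdot\mid X\}$ denotes the game with no Left option and sole Right option $X$. $o(G)$ is the misère outcome class (ordered $\mathscr{L}>\mathscr{N}>\mathscr{R}$, $\mathscr{L}>\mathscr{P}>\mathscr{R}$). A universe is a set of games closed under options, disjunctive sums, conjugates, and forming $\{\mathscr{G}^L\mid\mathscr{G}^R\}$ from nonempty finite subsets of it; $\mathcal{D}(G,H)$ is the smallest universe containing $G$ and $H$. $G\equiv_\mathcal{U}K$ means $o(G+X)=o(K+X)$ for all $X\in\mathcal{U}$. *)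

theory Defs
  imports Main "HOL-Library.FSet"
begin

text \<open>Finite partizan games in literal form: a game is a pair of finite sets
of games (Left options, Right options).\<close>
datatype game = Game (lopts: "game fset") (ropts: "game fset")

definition zero_game :: game where "zero_game = Game {||} {||}"
definition star_game :: game where "star_game = Game {|zero_game|} {|zero_game|}"
definition one_game :: game where "one_game = Game {|zero_game|} {||}"

text \<open>Misere play: the player unable to move wins.
 wins G = (Left wins moving first in G, Right wins moving first in G).\<close>
primrec wins :: "game \<Rightarrow> bool \<times> bool" where
  "wins (Game L R) =
     (L = {||} \<or> (\<exists>p \<in> fset (fimage wins L). \<not> snd p),
      R = {||} \<or> (\<exists>p \<in> fset (fimage wins R). \<not> fst p))"

datatype outcome = OL | ON | OP | OR

definition misere_outcome :: "game \<Rightarrow> outcome" where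
  "misere_outcome G = (case wins G of
      (True, False) \<Rightarrow> OL
    | (True, True) \<Rightarrow> ON
    | (False, False) \<Rightarrow> OP
    | (False, True) \<Rightarrow> OR)"

lemma game_opt_size_l: "x |\<in>| L \<Longrightarrow> size x < size (Game L R)"
  by (induct L) (auto simp: size_fset_overloaded_simps)

lemma game_opt_size_r: "x |\<in>| R \<Longrightarrow> size x < size (Game L R)"
  by (induct R) (auto simp: size_fset_overloaded_simps)

function game_plus :: "game \<Rightarrow> game \<Rightarrow> game" where
  "game_plus (Game GL GR) (Game HL HR) =
     Game ((\<lambda>x. game_plus x (Game HL HR)) |`| GL |\<union>| (\<lambda>y. game_plus (Game GL GR) y) |`| HL)
          ((\<lambda>x. game_plus x (Game HL HR)) |`| GR |\<union>| (\<lambda>y. game_plus (Game GL GR) y) |`| HR)"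
  by pat_completeness auto
termination
  by (relation "measure (\<lambda>(g,h). size g + size h)")
     (auto dest: game_opt_size_l game_opt_size_r)

primrec game_conj :: "game \<Rightarrow> game" where
  "game_conj (Game L R) = Game (fimage game_conj R) (fimage game_conj L)"

definition is_option :: "game \<Rightarrow> game \<Rightarrow> bool" where
  "is_option x G \<longleftrightarrow> x |\<in>| lopts G \<or> x |\<in>| ropts G"

definition universe :: "game set \<Rightarrow> bool" where
  "universe U \<longleftrightarrow>
     (\<forall>G\<in>U. \<forall>x. is_option x G \<longrightarrow> x \<in> U) \<and>
     (\<forall>G\<in>U. \<forall>H\<in>U. game_plus G H \<in> U) \<and>
     (\<forall>G\<in>U. game_conj G \<in> U) \<and>
     (\<forall>A B. A \<noteq> {||} \<and> B \<noteq> {||} \<and> fset A \<subseteq> U \<and> fset B \<subseteq> U \<longrightarrow> Game A B \<in> U)"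

definition univ_closure :: "game \<Rightarrow> game \<Rightarrow> game set" where
  "univ_closure G H = \<Inter> {U. universe U \<and> G \<in> U \<and> H \<in> U}"

definition equiv_mod :: "game set \<Rightarrow> game \<Rightarrow> game \<Rightarrow> bool" where
  "equiv_mod U G K \<longleftrightarrow> (\<forall>X\<in>U. misere_outcome (game_plus G X) = misere_outcome (game_plus K X))"

end

theory Submission
  imports Defs
begin

text \<open>The game \<open>1\<close> lies in the universe (it is the Right option of \<open>H\<close>) and
distinguishes \<open>G = {\<cdot> | *}\<close> from \<open>0\<close>: the sum \<open>0 + 1 = 1\<close> is a misere Right win,
whereas \<open>G + 1 = {G | * + 1}\<close> is a loss for whoever moves first. Left's only move
leads to \<open>G\<close>, where Right is forced to \<open>*\<close> and Left to \<open>0\<close>; Right's only move leads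
to \<open>* + 1\<close>, where Left answers \<open>*\<close> and Right is forced to \<open>0\<close>.\<close>

lemma game_plus_zero_left: "game_plus zero_game G = G"
proof (induction G)
  case (Game L R)
  then show ?case
    by (simp add: zero_game_def fset.map_ident_strong)
qed

lemma game_plus_zero_right: "game_plus G zero_game = G"
proof (induction G)
  case (Game L R)
  then show ?case
    by (simp add: zero_game_def fset.map_ident_strong)
qed

lemma star_plus_one: "game_plus star_game one_game = Game {|star_game, one_game|} {|one_game|}"
  unfolding star_game_def one_game_def
  by (subst game_plus.simps) (simp add: game_plus_zero_left game_plus_zero_right)

lemma no_left_options_plus_one:
  "game_plus (Game {||} R) one_game = Game {|Game {||} R|} ((\<lambda>x. game_plus x one_game) |`| R)"
  unfolding one_game_def
  by (subst game_plus.simps) (simp add: game_plus_zero_right)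

lemma wins_zero: "wins zero_game = (True, True)"
  by (simp add: zero_game_def)

lemma wins_one: "wins one_game = (False, True)"
  by (simp add: one_game_def wins_zero)

lemma wins_star: "wins star_game = (False, False)"
  by (simp add: star_game_def wins_zero)

lemma misere_outcome_one: "misere_outcome one_game = OR"
  by (simp add: misere_outcome_def wins_one)

lemma misere_outcome_right_star_plus_one:
  "misere_outcome (game_plus (Game {||} {|star_game|}) one_game) = OP"
proof -
  have "wins (game_plus star_game one_game) = (True, True)"
    by (simp add: star_plus_one wins_one wins_star)
  moreover have "wins (Game {||} {|star_game|}) = (True, True)"
    by (simp add: wins_star)
  ultimately show ?thesis
    by (simp add: no_left_options_plus_one misere_outcome_def)
qed

lemma right_generator_in_univ_closure: "H \<in> univ_closure G H"
  by (simp add: univ_closure_def)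

lemma univ_closure_option_closed:
  assumes "K \<in> univ_closure G H" and "is_option x K"
  shows "x \<in> univ_closure G H"
  using assms by (auto simp: univ_closure_def universe_def)

theorem mainTheorem19:
  shows "\<not> equiv_mod (univ_closure (Game {||} {|star_game|}) (Game {||} {|one_game|}))
             (Game {||} {|star_game|}) zero_game"
proof -
  let ?U = "univ_closure (Game {||} {|star_game|}) (Game {||} {|one_game|})"
  have "one_game \<in> ?U"
    by (rule univ_closure_option_closed[OF right_generator_in_univ_closure])
       (simp add: is_option_def)
  moreover have "misere_outcome (game_plus (Game {||} {|star_game|}) one_game)
      \<noteq> misere_outcome (game_plus zero_game one_game)"
    by (simp add: misere_outcome_right_star_plus_one game_plus_zero_left misere_outcome_one)
  ultimately show ?thesis
    unfolding equiv_mod_def by blast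
qed

end
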